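(* Let $\Pi>0$ and $m$ be a positive integer. Consider MPR interfaces $R_1=\langle\Pi,\Theta_1,m'_1\rangle,\dots,R_p=\langle\Pi,\Theta_p,m'_p\rangle$ with positive integers $m'_i$ and $(m'_i-1)\Pi\le\Theta_i\le m'_i\Pi$. Transform each $R_i$ into the periodic task set consisting of $m'_i-1$ tasks $(\Pi,\Pi,\Pi)$ and one task $(\Pi,\Theta_i-(m'_i-1)\Pi,\Pi)$. Then McNaughton's algorithm successfully schedules the union of all transformed tasks on $m$ identical unit-capacity processors if and only if $$\sum_{i=1}^p\frac{\Theta_i}{\Pi}\le m.$$
   Context: A periodic task $(T,C,T)$ releases a job at every time $jT$, $j\ge0$. The job requires $C$ units of execution in $(jT,(j+1)T]$ and never executes on two processors simultaneously. McNaughton's algorithm, for periodic tasks all having period and deadline $T$, works in each window $(jT,(j+1)T]$ separately. It takes the jobs in a fixed order and fills processor $1$ from time $jT$. Whenever a processor $p$ is filled up to $(j+1)T$, the remainder of the current job is placed on processor $p+1$ starting at time $jT$, and so on. Success means that the schedule: - uses only processors $1,\dots,m$; - never runs a job on two processors simultaneously; - meets all deadlines. *)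

theory Defs
  imports "HOL-Analysis.Analysis" "HOL-Library.Multiset"
begin

text \<open>A periodic task (T,C,T) with common period/deadline T is represented by its
execution requirement C; a task set with common period T is a list of
requirements, the list order being the fixed order used by McNaughton's algorithm.\<close>

definition mcn_start :: "real list \<Rightarrow> nat \<Rightarrow> real" where
  "mcn_start cs k = (\<Sum>i<k. cs ! i)"

definition mcn_window :: "real \<Rightarrow> real \<Rightarrow> nat" where
  "mcn_window T t = nat (\<lceil>t / T\<rceil> - 1)"

text \<open>McNaughton's wrap-around schedule (with unboundedly many processors,
numbered 1,2,...): in each window the jobs are laid out consecutively on the line
of length (number of processors) * T, processor p covering the segment
((p-1)T, pT]. Result: the task whose job runs on processor p at time t, if any.\<close>
definition mcn_sched :: "real \<Rightarrow> real list \<Rightarrow> nat \<Rightarrow> real \<Rightarrow> nat option" where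
  "mcn_sched T cs p t =
    (if t \<le> 0 \<or> p = 0 then None else
     (let j = mcn_window T t; s = t - real j * T; x = (real p - 1) * T + s;
          P = (\<lambda>k. k < length cs \<and> mcn_start cs k < x \<and> x \<le> mcn_start cs k + cs ! k)
      in if \<exists>k. P k then Some (LEAST k. P k) else None))"

definition mcn_success :: "real \<Rightarrow> real list \<Rightarrow> nat \<Rightarrow> bool" where
  "mcn_success T cs m \<longleftrightarrow>
     (\<forall>p t. mcn_sched T cs p t \<noteq> None \<longrightarrow> 1 \<le> p \<and> p \<le> m)
   \<and> (\<forall>p q t k. mcn_sched T cs p t = Some k \<and> mcn_sched T cs q t = Some k \<longrightarrow> p = q)
   \<and> (\<forall>j k. k < length cs \<longrightarrow>
        (\<Sum>p. emeasure lborel {t \<in> {real j * T<..(real j + 1) * T}. mcn_sched T cs p t = Some k})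
          = ennreal (cs ! k))"

definition mpr_tasks :: "real \<Rightarrow> real \<Rightarrow> nat \<Rightarrow> real list" where
  "mpr_tasks Per Theta m' = replicate (m' - 1) Per @ [Theta - (real m' - 1) * Per]"

end

theory Submission
  imports Defs
begin

text \<open>In every window McNaughton's algorithm lays the jobs end to end on the line \<open>(0, \<Sum>C]\<close>,
processor \<open>p\<close> serving the segment \<open>((p-1)T, pT]\<close> of that line. Hence it needs exactly the
processors \<open>p\<close> with \<open>(p-1)T < \<Sum>C\<close>, each job receives the length \<open>C\<close> of its segment, and
since a segment of length \<open>C \<le> T\<close> contains no two points at distance \<open>T\<close>, no job runs on two
processors at once. So the algorithm succeeds on \<open>m\<close> processors iff \<open>\<Sum>C \<le> mT\<close>.
The transformation of the interface \<open>R\<^sub>i\<close> yields tasks with \<open>0 \<le> C \<le> \<Pi>\<close> and total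
requirement \<open>\<Theta>\<^sub>i\<close>, so \<open>\<Sum>C = \<Sum>\<^sub>i \<Theta>\<^sub>i\<close>.\<close>

definition mcn_segment :: "real list \<Rightarrow> nat \<Rightarrow> real set" where
  "mcn_segment cs k = {mcn_start cs k<..mcn_start cs k + cs ! k}"

lemma mcn_start_Suc: "mcn_start cs (Suc k) = mcn_start cs k + cs ! k"
  by (simp add: mcn_start_def)

lemma mcn_start_length: "mcn_start cs (length cs) = sum_list cs"
  by (simp add: mcn_start_def sum_list_sum_nth atLeast0LessThan)

lemma mcn_start_mono:
  assumes "\<forall>c\<in>set cs. 0 \<le> c" "k \<le> k'" "k' \<le> length cs"
  shows "mcn_start cs k \<le> mcn_start cs k'"
  unfolding mcn_start_def using assms by (auto intro!: sum_mono2)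

lemma mcn_segment_bounds:
  assumes "\<forall>c\<in>set cs. 0 \<le> c" "k < length cs" "x \<in> mcn_segment cs k"
  shows "0 < x" "x \<le> sum_list cs"
proof -
  have "0 \<le> mcn_start cs k"
    using mcn_start_mono[OF assms(1), of 0 k] assms(2) by (simp add: mcn_start_def)
  moreover have "mcn_start cs k + cs ! k \<le> sum_list cs"
    using mcn_start_mono[OF assms(1), of "Suc k" "length cs"] assms(2)
    by (simp add: mcn_start_Suc mcn_start_length)
  ultimately show "0 < x" "x \<le> sum_list cs"
    using assms(3) by (auto simp: mcn_segment_def)
qed

lemma mcn_segments_disjoint:
  assumes "\<forall>c\<in>set cs. 0 \<le> c" "k < length cs" "k' < length cs"
    and "x \<in> mcn_segment cs k" "x \<in> mcn_segment cs k'"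
  shows "k = k'"
proof (rule ccontr)
  have earlier: False if "i < i'" "i' < length cs" "x \<in> mcn_segment cs i" "x \<in> mcn_segment cs i'"
    for i i'
  proof -
    have "mcn_start cs (Suc i) \<le> mcn_start cs i'"
      using that assms(1) by (intro mcn_start_mono) auto
    then show False using that by (simp add: mcn_segment_def mcn_start_Suc)
  qed
  assume "k \<noteq> k'"
  then show False
    using earlier[of k k'] earlier[of k' k] assms by (cases "k < k'") auto
qed

lemma mcn_segments_cover:
  "0 < x \<Longrightarrow> x \<le> sum_list cs \<Longrightarrow> \<exists>k<length cs. x \<in> mcn_segment cs k"
proof (induction cs arbitrary: x)
  case Nil
  then show ?case by simp
next
  case (Cons c cs)
  show ?case
  proof (cases "x \<le> c")
    case True
    then show ?thesis
      using Cons.prems by (intro exI[of _ 0]) (simp add: mcn_segment_def mcn_start_def)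
  next
    case False
    then have "0 < x - c" "x - c \<le> sum_list cs"
      using Cons.prems by auto
    then obtain k where "k < length cs" "x - c \<in> mcn_segment cs k"
      using Cons.IH by blast
    moreover have "mcn_start (c # cs) (Suc k) = c + mcn_start cs k"
      unfolding mcn_start_def sum.lessThan_Suc_shift by simp
    ultimately show ?thesis
      by (intro exI[of _ "Suc k"]) (auto simp: mcn_segment_def)
  qed
qed

lemma window_exists:
  assumes "T > 0" "t > 0"
  shows "\<exists>j::nat. t \<in> {real j * T<..(real j + 1) * T}"
proof -
  define j where "j = nat (\<lceil>t / T\<rceil> - 1)"
  have "\<lceil>t / T\<rceil> \<ge> 1"
    using assms by simp
  then have "real j = of_int \<lceil>t / T\<rceil> - 1"
    by (simp add: j_def)
  then have "real j < t / T" "t / T \<le> real j + 1"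
    by linarith+
  then have "t \<in> {real j * T<..(real j + 1) * T}"
    using assms(1) by (simp add: field_simps)
  then show ?thesis ..
qed

lemma mcn_window_eq:
  assumes "T > 0" "t \<in> {real j * T<..(real j + 1) * T}"
  shows "mcn_window T t = j"
proof -
  have "\<lceil>t / T\<rceil> = int j + 1"
    unfolding ceiling_eq_iff using assms by (simp add: field_simps)
  then show ?thesis by (simp add: mcn_window_def)
qed

lemma mcn_sched_Some_iff:
  assumes "T > 0" "\<forall>c\<in>set cs. 0 \<le> c" "t \<in> {real j * T<..(real j + 1) * T}"
    and "p \<ge> 1" "k < length cs"
  shows "mcn_sched T cs p t = Some k \<longleftrightarrow>
    (real p - 1) * T + (t - real j * T) \<in> mcn_segment cs k"
proof -
  define x where "x = (real p - 1) * T + (t - real j * T)"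
  define P where "P k \<longleftrightarrow> k < length cs \<and> x \<in> mcn_segment cs k" for k
  have "0 \<le> real j * T"
    using assms(1) by simp
  with assms(3) have "t > 0" by simp
  then have sched: "mcn_sched T cs p t = (if \<exists>k. P k then Some (LEAST k. P k) else None)"
    using assms(4) mcn_window_eq[OF assms(1,3)]
    by (simp add: mcn_sched_def Let_def P_def x_def mcn_segment_def; blast)
  have "P k \<Longrightarrow> (LEAST k. P k) = k"
    using mcn_segments_disjoint[OF assms(2)] by (intro Least_equality) (auto simp: P_def)
  then have "mcn_sched T cs p t = Some k \<longleftrightarrow> P k"
    using sched by (metis LeastI option.distinct(1) option.inject)
  then show ?thesis
    using assms(5) by (simp add: P_def x_def)
qed

lemma mcn_sched_SomeD:
  assumes "T > 0" "mcn_sched T cs p t = Some k"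
  shows "p \<ge> 1 \<and> k < length cs \<and> (\<exists>j::nat. t \<in> {real j * T<..(real j + 1) * T} \<and>
    (real p - 1) * T + (t - real j * T) \<in> mcn_segment cs k)"
proof -
  have "t > 0" "p \<ge> 1"
    using assms(2) by (auto simp: mcn_sched_def split: if_splits)
  moreover obtain j where j: "t \<in> {real j * T<..(real j + 1) * T}"
    using window_exists[OF assms(1) \<open>t > 0\<close>] by blast
  moreover have "k < length cs \<and> (real p - 1) * T + (t - real j * T) \<in> mcn_segment cs k"
    using assms(2) \<open>t > 0\<close> \<open>p \<ge> 1\<close> mcn_window_eq[OF assms(1) j]
    by (auto simp: mcn_sched_def Let_def mcn_segment_def split: if_splits intro: LeastI2_ex)
  ultimately show ?thesis by blast
qed

lemma mcn_sched_processor_bound: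
  assumes "T > 0" "\<forall>c\<in>set cs. 0 \<le> c" "mcn_sched T cs p t = Some k"
  shows "(real p - 1) * T < sum_list cs"
proof -
  obtain j where "k < length cs" "t \<in> {real j * T<..(real j + 1) * T}"
    and x: "(real p - 1) * T + (t - real j * T) \<in> mcn_segment cs k"
    using mcn_sched_SomeD[OF assms(1,3)] by blast
  with mcn_segment_bounds(2)[OF assms(2) _ x] show ?thesis by auto
qed

lemma mcn_sched_overflow:
  assumes "T > 0" "\<forall>c\<in>set cs. 0 \<le> c" "real m * T < sum_list cs"
  shows "\<exists>t k. mcn_sched T cs (Suc m) t = Some k"
proof -
  define t where "t = min T (sum_list cs - real m * T)"
  have t: "t \<in> {real 0 * T<..(real 0 + 1) * T}" "real m * T + t \<le> sum_list cs"
    using assms by (auto simp: t_def)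
  moreover have "0 < real m * T + t"
    using t assms(1) by (simp add: add_nonneg_pos)
  ultimately obtain k where "k < length cs" "real m * T + t \<in> mcn_segment cs k"
    using mcn_segments_cover by blast
  then have "mcn_sched T cs (Suc m) t = Some k"
    using mcn_sched_Some_iff[OF assms(1,2) t(1), of "Suc m" k] by simp
  then show ?thesis by blast
qed

text \<open>Two processors running job \<open>k\<close> at the same time see positions at distance \<open>|p - q| T\<close>
inside the segment of \<open>k\<close>, which is shorter than \<open>T\<close> unless \<open>p = q\<close>.\<close>

lemma mcn_sched_sequential:
  assumes "T > 0" "\<forall>c\<in>set cs. 0 \<le> c \<and> c \<le> T"
    and "mcn_sched T cs p t = Some k" "mcn_sched T cs q t = Some k"
  shows "p = q"
proof -
  have nonneg: "\<forall>c\<in>set cs. 0 \<le> c"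
    using assms(2) by blast
  obtain j where "p \<ge> 1" "k < length cs" and j: "t \<in> {real j * T<..(real j + 1) * T}"
    and xp: "(real p - 1) * T + (t - real j * T) \<in> mcn_segment cs k"
    using mcn_sched_SomeD[OF assms(1,3)] by blast
  moreover have "q \<ge> 1"
    using mcn_sched_SomeD[OF assms(1,4)] by blast
  ultimately have xq: "(real q - 1) * T + (t - real j * T) \<in> mcn_segment cs k"
    using mcn_sched_Some_iff[OF assms(1) nonneg j] assms(4) by blast
  have "cs ! k \<le> T"
    using assms(2) \<open>k < length cs\<close> by auto
  then have "\<bar>real p * T - real q * T\<bar> < T"
    using xp xq by (simp add: mcn_segment_def abs_less_iff algebra_simps)
  then have "\<bar>real p - real q\<bar> * T < 1 * T"
    using assms(1) by (simp add: abs_mult flip: left_diff_distrib)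
  then have "\<bar>real p - real q\<bar> < 1"
    using assms(1) mult_less_cancel_right_pos by blast
  then show "p = q" by linarith
qed

lemma emeasure_lborel_Ioc_ennreal: "emeasure lborel {a<..b::real} = ennreal (b - a)"
  by (cases "a \<le> b") (auto simp: ennreal_neg)

lemma suminf_emeasure_Ioc_tiling:
  fixes T :: real
  assumes "T > 0" "A \<in> sets lborel" "A \<subseteq> {0<..}"
  shows "(\<Sum>p. emeasure lborel ({(real p - 1) * T<..real p * T} \<inter> A)) = emeasure lborel A"
proof -
  let ?I = "\<lambda>p::nat. {(real p - 1) * T<..real p * T}"
  have "disjoint_family (\<lambda>p. ?I p \<inter> A)"
    unfolding disjoint_family_on_def
  proof (intro ballI impI)
    fix p q :: nat
    assume "p \<noteq> q"
    then have "real p * T \<le> (real q - 1) * T \<or> real q * T \<le> (real p - 1) * T"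
      using assms(1) by (cases "p < q") (auto intro!: mult_right_mono)
    then show "(?I p \<inter> A) \<inter> (?I q \<inter> A) = {}"
      by (auto simp: Ioc_disjoint)
  qed
  moreover have "(\<Union>p. ?I p \<inter> A) = A"
  proof (intro equalityI subsetI)
    fix y
    assume "y \<in> A"
    then obtain j :: nat where "y \<in> {real j * T<..(real j + 1) * T}"
      using window_exists[OF assms(1)] assms(3) by blast
    then have "y \<in> ?I (Suc j)" by (simp add: algebra_simps)
    with \<open>y \<in> A\<close> show "y \<in> (\<Union>p. ?I p \<inter> A)" by blast
  qed auto
  ultimately show ?thesis
    using assms(2) by (subst suminf_emeasure) auto
qed

text \<open>Translating window \<open>j\<close> onto the segment \<open>((p-1)T, pT]\<close> of processor \<open>p\<close> preserves
measure.\<close>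

lemma emeasure_mcn_sched_on_processor:
  assumes "T > 0" "\<forall>c\<in>set cs. 0 \<le> c" "k < length cs"
  shows "emeasure lborel {t \<in> {real j * T<..(real j + 1) * T}. mcn_sched T cs p t = Some k}
       = emeasure lborel ({(real p - 1) * T<..real p * T} \<inter> mcn_segment cs k)"
proof (cases "p = 0")
  case True
  then have "{(real p - 1) * T<..real p * T} \<inter> mcn_segment cs k = {}"
    using mcn_segment_bounds(1)[OF assms(2,3)] by fastforce
  moreover have "{t \<in> {real j * T<..(real j + 1) * T}. mcn_sched T cs p t = Some k} = {}"
    using True by (simp add: mcn_sched_def)
  ultimately show ?thesis by (metis emeasure_empty)
next
  case False
  define d where "d = (real p - 1) * T - real j * T"
  have "{t \<in> {real j * T<..(real j + 1) * T}. mcn_sched T cs p t = Some k}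
      = {real j * T<..(real j + 1) * T} \<inter> {mcn_start cs k - d<..mcn_start cs k + cs ! k - d}"
    using mcn_sched_Some_iff[OF assms(1,2) _ _ assms(3), of _ j p] False
    by (auto simp: mcn_segment_def d_def algebra_simps)
  moreover have "(real j + 1) * T = real p * T - d" "real j * T = (real p - 1) * T - d"
    by (auto simp: d_def algebra_simps)
  ultimately show ?thesis
    by (simp add: emeasure_lborel_Ioc_ennreal mcn_segment_def
        flip: min_diff_distrib_left max_diff_distrib_left)
qed

lemma mcn_sched_execution:
  assumes "T > 0" "\<forall>c\<in>set cs. 0 \<le> c" "k < length cs"
  shows "(\<Sum>p. emeasure lborel {t \<in> {real j * T<..(real j + 1) * T}. mcn_sched T cs p t = Some k})
       = ennreal (cs ! k)"
proof -
  have "mcn_segment cs k \<subseteq> {0<..}"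
    using mcn_segment_bounds(1)[OF assms(2,3)] by blast
  then have "(\<Sum>p. emeasure lborel {t \<in> {real j * T<..(real j + 1) * T}. mcn_sched T cs p t = Some k})
      = emeasure lborel (mcn_segment cs k)"
    using assms suminf_emeasure_Ioc_tiling[of T "mcn_segment cs k"]
    by (simp only: emeasure_mcn_sched_on_processor) (simp add: mcn_segment_def)
  also have "\<dots> = ennreal (cs ! k)"
    using assms(2,3) by (simp add: mcn_segment_def)
  finally show ?thesis .
qed

theorem mcn_success_iff:
  assumes "T > 0" "\<forall>c\<in>set cs. 0 \<le> c \<and> c \<le> T"
  shows "mcn_success T cs m \<longleftrightarrow> sum_list cs \<le> real m * T"
proof
  have nonneg: "\<forall>c\<in>set cs. 0 \<le> c"
    using assms(2) by blast
  assume "sum_list cs \<le> real m * T"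
  have "1 \<le> p \<and> p \<le> m" if running: "mcn_sched T cs p t \<noteq> None" for p t
  proof -
    obtain k where k: "mcn_sched T cs p t = Some k"
      using running by blast
    have "(real p - 1) * T < real m * T"
      using mcn_sched_processor_bound[OF assms(1) nonneg k] \<open>sum_list cs \<le> real m * T\<close>
      by linarith
    then have "real p - 1 < real m"
      using assms(1) by simp
    then show ?thesis
      using mcn_sched_SomeD[OF assms(1) k] by linarith
  qed
  then show "mcn_success T cs m"
    unfolding mcn_success_def
    using mcn_sched_sequential[OF assms] mcn_sched_execution[OF assms(1) nonneg]
    by (intro conjI allI impI) auto
next
  assume "mcn_success T cs m"
  then have idle: "mcn_sched T cs (Suc m) t = None" for t
    unfolding mcn_success_def by (meson Suc_n_not_le_n)
  show "sum_list cs \<le> real m * T"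
  proof (rule ccontr)
    assume "\<not> sum_list cs \<le> real m * T"
    then obtain t k where "mcn_sched T cs (Suc m) t = Some k"
      using mcn_sched_overflow[OF assms(1)] assms(2) by (meson not_le)
    with idle show False by simp
  qed
qed

lemma sum_list_mpr_tasks:
  assumes "m' \<ge> 1"
  shows "sum_list (mpr_tasks Per Theta m') = Theta"
proof -
  have "real (m' - 1) = real m' - 1"
    using assms by simp
  then show ?thesis
    by (simp add: mpr_tasks_def sum_list_replicate algebra_simps)
qed

lemma mpr_tasks_bounds:
  assumes "Per \<ge> 0" "(real m' - 1) * Per \<le> Theta" "Theta \<le> real m' * Per"
    and "c \<in> set (mpr_tasks Per Theta m')"
  shows "0 \<le> c \<and> c \<le> Per"
  using assms by (auto simp: mpr_tasks_def algebra_simps split: if_splits)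

lemma sum_list_concat_mpr_tasks:
  "(\<And>i. i \<in> set is \<Longrightarrow> m' i \<ge> 1) \<Longrightarrow>
    sum_list (concat (map (\<lambda>i. mpr_tasks Per (Theta i) (m' i)) is)) = (\<Sum>i\<leftarrow>is. Theta i)"
  by (induction "is") (auto simp: sum_list_mpr_tasks)

lemma mpr_tasks_concat_bounds:
  assumes "Per \<ge> 0"
    and "\<And>i. i \<in> set is \<Longrightarrow> (real (m' i) - 1) * Per \<le> Theta i \<and> Theta i \<le> real (m' i) * Per"
    and "c \<in> set (concat (map (\<lambda>i. mpr_tasks Per (Theta i) (m' i)) is))"
  shows "0 \<le> c \<and> c \<le> Per"
proof -
  obtain i where "i \<in> set is" "c \<in> set (mpr_tasks Per (Theta i) (m' i))"
    using assms(3) by auto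
  with assms(1,2) show ?thesis
    by (meson mpr_tasks_bounds)
qed

theorem theorem5:
  fixes Per :: real and m p :: nat and Theta :: "nat \<Rightarrow> real" and m' :: "nat \<Rightarrow> nat"
    and cs :: "real list"
  assumes "Per > 0" and "m \<ge> 1"
    and "\<And>i. i \<in> {1..p} \<Longrightarrow> m' i \<ge> 1"
    and "\<And>i. i \<in> {1..p} \<Longrightarrow> (real (m' i) - 1) * Per \<le> Theta i \<and> Theta i \<le> real (m' i) * Per"
    and "mset cs = mset (concat (map (\<lambda>i. mpr_tasks Per (Theta i) (m' i)) [1..<p+1]))"
  shows "mcn_success Per cs m \<longleftrightarrow> (\<Sum>i=1..p. Theta i / Per) \<le> real m"
proof -
  let ?tasks = "\<lambda>i. mpr_tasks Per (Theta i) (m' i)"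
  have indices: "set [1..<p+1] = {1..p}"
    by auto
  have "\<forall>c\<in>set cs. 0 \<le> c \<and> c \<le> Per"
    using mpr_tasks_concat_bounds[of Per "[1..<p+1]" m' Theta,
        OF less_imp_le[OF assms(1)] assms(4)[folded indices]]
      mset_eq_setD[OF assms(5)] by blast
  then have "mcn_success Per cs m \<longleftrightarrow> sum_list cs \<le> real m * Per"
    using mcn_success_iff assms(1) by blast
  moreover have "sum_list cs = sum_list (concat (map ?tasks [1..<p+1]))"
    using assms(5) by (metis sum_mset_sum_list)
  moreover have "\<dots> = (\<Sum>i\<leftarrow>[1..<p+1]. Theta i)"
    using sum_list_concat_mpr_tasks[of "[1..<p+1]" m' Per Theta, OF assms(3)[folded indices]] .
  moreover have "\<dots> = (\<Sum>i=1..p. Theta i)"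
    by (metis indices sum_set_upt_conv_sum_list_nat)
  ultimately show ?thesis
    using assms(1) by (simp add: pos_divide_le_eq flip: sum_divide_distrib)
qed

end
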